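(* For $t\in\{0,1\}$ and $x\in\mathcal X$, $\Pr(Y^*=1\mid T^*=t,X^*=x)=\frac{r(x,p_0)\Pi(t\mid 1,x)}{\Pi(t\mid 0,x)+r(x,p)\{\Pi(t\mid 1,x)-\Pi(t\mid 0,x)\}}$, where $p=p_0$ under Design 1 and $p=0$ under Design 2.
   Context: Population variables: $Y^*\in\{0,1\}$, $T^*\in\{0,1\}$, covariate vector $X^*$; $p_0:=\Pr(Y^*=1)$. The observed vector $(Y,T,X)$ arises from Bernoulli sampling: $Y\in\{0,1\}$ is drawn with known probability $h_0:=\Pr(Y=1)\in(0,1)$, and given $Y=y$, $(T,X)$ is drawn from a distribution $\mathcal P_y$. Densities (or mass functions) are denoted by $f$. Design 1 (case-control): for all $t\in\{0,1\}$, $x\in\mathcal X$, $y\in\{0,1\}$, $f_{X|Y}(x\mid y)=f_{X^*|Y^*}(x\mid y)$ and $\Pr(T=t\mid X=x,Y=y)=\Pr(T^*=t\mid X^*=x,Y^*=y)$. Design 2 (case-population): for all $t,x$, $f_{X|Y}(x\mid 0)=f_{X^*}(x)$, $\Pr(T=t\mid X=x,Y=0)=\Pr(T^*=t\mid X^*=x)$, $f_{X|Y}(x\mid 1)=f_{X^*|Y^*}(x\mid 1)$, $\Pr(T=t\mid X=x,Y=1)=\Pr(T^*=t\mid X^*=x,Y^*=1)$. Standing common support assumption: the support of $X^*$ and that of $X$ given $Y=y$ for $y=0,1$ coincide; call it $\mathcal X$. Let $\Pi(t\mid y,x):=\Pr(T=t\mid Y=y,X=x)$, assumed nonzero for all $t,y$.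 For $p\in[0,1]$, under Design 1, $r(x,p):=\frac{p(1-h_0)\Pr(Y=1\mid X=x)}{p(1-h_0)\Pr(Y=1\mid X=x)+h_0(1-p)\Pr(Y=0\mid X=x)}$, and under Design 2, $r(x,p):=\frac{p(1-h_0)}{h_0}\frac{\Pr(Y=1\mid X=x)}{\Pr(Y=0\mid X=x)}$. *)

theory Defs
  imports "HOL-Analysis.Analysis"
begin

(* Conventions: the binary values 0/1 are encoded as False/True.
   X-values live in a measure space M (counting measure for discrete X,
   Lebesgue for continuous X); all densities are w.r.t. counting measure on
   {0,1} (for Y, T) times M (for X).

   Population: joint density g y t x of (Ystar, Tstar, Xstar).
   Observed:   Y ~ Bernoulli(h0); given Y = y, (T,X) ~ P_y with density k y t x. *)

datatype design = CaseControl | CasePopulation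

definition is_density :: "'x measure \<Rightarrow> (bool \<Rightarrow> 'x \<Rightarrow> real) \<Rightarrow> bool" where
  "is_density M d \<longleftrightarrow>
     (\<forall>t. \<forall>x\<in>space M. 0 \<le> d t x) \<and> (\<forall>t. integrable M (d t)) \<and>
     (\<integral>x. d False x \<partial>M) + (\<integral>x. d True x \<partial>M) = 1"

definition pop_density :: "'x measure \<Rightarrow> (bool \<Rightarrow> bool \<Rightarrow> 'x \<Rightarrow> real) \<Rightarrow> bool" where
  "pop_density M g \<longleftrightarrow>
     (\<forall>y t. \<forall>x\<in>space M. 0 \<le> g y t x) \<and> (\<forall>y t. integrable M (g y t)) \<and>
     (\<Sum>y\<in>UNIV. \<Sum>t\<in>UNIV. \<integral>x. g y t x \<partial>M) = 1"

definition PrYstar :: "'x measure \<Rightarrow> (bool \<Rightarrow> bool \<Rightarrow> 'x \<Rightarrow> real) \<Rightarrow> bool \<Rightarrow> real" where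
  "PrYstar M g y = (\<integral>x. g y False x + g y True x \<partial>M)"

definition fXstar :: "(bool \<Rightarrow> bool \<Rightarrow> 'x \<Rightarrow> real) \<Rightarrow> 'x \<Rightarrow> real" where
  "fXstar g x = g False False x + g False True x + g True False x + g True True x"

definition fX_Ystar :: "'x measure \<Rightarrow> (bool \<Rightarrow> bool \<Rightarrow> 'x \<Rightarrow> real) \<Rightarrow> 'x \<Rightarrow> bool \<Rightarrow> real" where
  "fX_Ystar M g x y = (g y False x + g y True x) / PrYstar M g y"

definition PrT_XYstar :: "(bool \<Rightarrow> bool \<Rightarrow> 'x \<Rightarrow> real) \<Rightarrow> bool \<Rightarrow> 'x \<Rightarrow> bool \<Rightarrow> real" where
  "PrT_XYstar g t x y = g y t x / (g y False x + g y True x)"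

definition PrT_Xstar :: "(bool \<Rightarrow> bool \<Rightarrow> 'x \<Rightarrow> real) \<Rightarrow> bool \<Rightarrow> 'x \<Rightarrow> real" where
  "PrT_Xstar g t x = (g False t x + g True t x) / fXstar g x"

definition PrY1_TXstar :: "(bool \<Rightarrow> bool \<Rightarrow> 'x \<Rightarrow> real) \<Rightarrow> bool \<Rightarrow> 'x \<Rightarrow> real" where
  "PrY1_TXstar g t x = g True t x / (g False t x + g True t x)"

definition fX_Y :: "(bool \<Rightarrow> bool \<Rightarrow> 'x \<Rightarrow> real) \<Rightarrow> 'x \<Rightarrow> bool \<Rightarrow> real" where
  "fX_Y k x y = k y False x + k y True x"

definition Pi :: "(bool \<Rightarrow> bool \<Rightarrow> 'x \<Rightarrow> real) \<Rightarrow> bool \<Rightarrow> bool \<Rightarrow> 'x \<Rightarrow> real" where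
  "Pi k t y x = k y t x / fX_Y k x y"

definition PrY_X :: "real \<Rightarrow> (bool \<Rightarrow> bool \<Rightarrow> 'x \<Rightarrow> real) \<Rightarrow> bool \<Rightarrow> 'x \<Rightarrow> real" where
  "PrY_X h0 k y x = (if y then h0 else 1 - h0) * fX_Y k x y /
      (h0 * fX_Y k x True + (1 - h0) * fX_Y k x False)"

definition supp_Xstar :: "'x measure \<Rightarrow> (bool \<Rightarrow> bool \<Rightarrow> 'x \<Rightarrow> real) \<Rightarrow> 'x set" where
  "supp_Xstar M g = {x \<in> space M. 0 < fXstar g x}"

definition supp_X_Y :: "'x measure \<Rightarrow> (bool \<Rightarrow> bool \<Rightarrow> 'x \<Rightarrow> real) \<Rightarrow> bool \<Rightarrow> 'x set" where
  "supp_X_Y M k y = {x \<in> space M. 0 < fX_Y k x y}"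

definition design1 :: "'x measure \<Rightarrow> (bool \<Rightarrow> bool \<Rightarrow> 'x \<Rightarrow> real) \<Rightarrow> (bool \<Rightarrow> bool \<Rightarrow> 'x \<Rightarrow> real) \<Rightarrow> 'x set \<Rightarrow> bool" where
  "design1 M g k XX \<longleftrightarrow> (\<forall>t y. \<forall>x\<in>XX.
      fX_Y k x y = fX_Ystar M g x y \<and> Pi k t y x = PrT_XYstar g t x y)"

definition design2 :: "'x measure \<Rightarrow> (bool \<Rightarrow> bool \<Rightarrow> 'x \<Rightarrow> real) \<Rightarrow> (bool \<Rightarrow> bool \<Rightarrow> 'x \<Rightarrow> real) \<Rightarrow> 'x set \<Rightarrow> bool" where
  "design2 M g k XX \<longleftrightarrow> (\<forall>t. \<forall>x\<in>XX.
      fX_Y k x False = fXstar g x \<and> Pi k t False x = PrT_Xstar g t x \<and>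
      fX_Y k x True = fX_Ystar M g x True \<and> Pi k t True x = PrT_XYstar g t x True)"

definition holds_design :: "design \<Rightarrow> 'x measure \<Rightarrow> (bool \<Rightarrow> bool \<Rightarrow> 'x \<Rightarrow> real) \<Rightarrow> (bool \<Rightarrow> bool \<Rightarrow> 'x \<Rightarrow> real) \<Rightarrow> 'x set \<Rightarrow> bool" where
  "holds_design d M g k XX = (case d of CaseControl \<Rightarrow> design1 M g k XX | CasePopulation \<Rightarrow> design2 M g k XX)"

definition rfun :: "design \<Rightarrow> real \<Rightarrow> (bool \<Rightarrow> bool \<Rightarrow> 'x \<Rightarrow> real) \<Rightarrow> 'x \<Rightarrow> real \<Rightarrow> real" where
  "rfun d h0 k x p = (case d of
      CaseControl \<Rightarrow>
        p * (1 - h0) * PrY_X h0 k True x /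
        (p * (1 - h0) * PrY_X h0 k True x + h0 * (1 - p) * PrY_X h0 k False x)
    | CasePopulation \<Rightarrow>
        p * (1 - h0) / h0 * (PrY_X h0 k True x / PrY_X h0 k False x))"

end

theory Submission
  imports Defs
begin

text \<open>Write \<open>s\<^sub>y\<close> and \<open>a\<^sub>y\<close> for the population densities of \<open>(Y\<^sup>* = y, X\<^sup>* = x)\<close> and
  \<open>(Y\<^sup>* = y, T\<^sup>* = t, X\<^sup>* = x)\<close>, so the claim is about \<open>a\<^sub>1 / (a\<^sub>0 + a\<^sub>1)\<close>.
  Under either design the sampling factors \<open>h\<^sub>0\<close>, \<open>1 - h\<^sub>0\<close> and the normalisations by
  \<open>p\<^sub>0\<close>, \<open>1 - p\<^sub>0\<close> cancel in \<open>r(x, p\<^sub>0)\<close>, which is therefore \<open>s\<^sub>1 / (s\<^sub>0 + s\<^sub>1) = Pr(Y\<^sup>* = 1 | X\<^sup>* = x)\<close>.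
  In the case-control design \<open>\<Pi>(t | y, x) = a\<^sub>y / s\<^sub>y\<close>, and mixing these with weights \<open>r\<close>, \<open>1 - r\<close>
  recovers \<open>Pr(T\<^sup>* = t | X\<^sup>* = x)\<close> as denominator of Bayes' rule; in the case-population
  design the control sample supplies that denominator directly, hence \<open>r(x, 0) = 0\<close> there.\<close>

definition fXYstar :: "(bool \<Rightarrow> bool \<Rightarrow> 'x \<Rightarrow> real) \<Rightarrow> bool \<Rightarrow> 'x \<Rightarrow> real" where
  "fXYstar g y x = g y False x + g y True x"

lemma PrYstar_False_add_True:
  assumes "pop_density M g"
  shows "PrYstar M g False + PrYstar M g True = 1"
proof -
  have int: "\<And>y t. integrable M (g y t)" and "(\<Sum>y\<in>UNIV. \<Sum>t\<in>UNIV. \<integral>x. g y t x \<partial>M) = 1"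
    using assms by (simp_all add: pop_density_def)
  then show ?thesis
    by (simp add: PrYstar_def UNIV_bool Bochner_Integration.integral_add[OF int int] add.commute)
qed

lemma posterior_eq_reweighted_conditionals:
  fixes a0 a1 s0 s1 :: "'a :: field"
  assumes "s0 \<noteq> 0" "s1 \<noteq> 0" "s0 + s1 \<noteq> 0"
  defines "r \<equiv> s1 / (s0 + s1)"
  shows "a1 / (a0 + a1) = r * (a1 / s1) / (a0 / s0 + r * (a1 / s1 - a0 / s0))"
proof -
  have weighted1: "r * (a1 / s1) = a1 / (s0 + s1)"
    using assms by (simp add: r_def)
  have weighted0: "r * (a0 / s0) = a0 / s0 - a0 / (s0 + s1)"
    using assms by (simp add: r_def field_simps)
  have "a0 / s0 + r * (a1 / s1 - a0 / s0) = a0 / s0 + r * (a1 / s1) - r * (a0 / s0)"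
    by (simp add: algebra_simps)
  also have "\<dots> = (a0 + a1) / (s0 + s1)"
    unfolding weighted0 weighted1 by (simp add: add_divide_distrib)
  finally have mixture: "a0 / s0 + r * (a1 / s1 - a0 / s0) = (a0 + a1) / (s0 + s1)" .
  show ?thesis
    unfolding mixture weighted1 using assms(3) by simp
qed

lemma PrY_X_denominator_pos:
  assumes "0 < h0" "h0 < 1" "0 < fX_Y k x False" "0 < fX_Y k x True"
  shows "0 < h0 * fX_Y k x True + (1 - h0) * fX_Y k x False"
  using assms by (simp add: add_pos_pos)

lemma PrY_X_odds:
  assumes "h0 * fX_Y k x True + (1 - h0) * fX_Y k x False \<noteq> 0"
  shows "PrY_X h0 k True x / PrY_X h0 k False x = h0 * fX_Y k x True / ((1 - h0) * fX_Y k x False)"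
  using assms by (simp add: PrY_X_def)

lemma rfun_CaseControl_eq:
  assumes "0 < h0" "h0 < 1" "0 < fX_Y k x False" "0 < fX_Y k x True"
  shows "rfun CaseControl h0 k x p =
    p * fX_Y k x True / (p * fX_Y k x True + (1 - p) * fX_Y k x False)"
proof -
  define D where "D = h0 * fX_Y k x True + (1 - h0) * fX_Y k x False"
  define c where "c = h0 * (1 - h0) / D"
  have D: "D \<noteq> 0"
    using PrY_X_denominator_pos[OF assms] by (simp add: D_def)
  have c: "c \<noteq> 0"
    using assms D by (simp add: c_def)
  have case_term: "p * (1 - h0) * PrY_X h0 k True x = c * (p * fX_Y k x True)"
    and control_term: "h0 * (1 - p) * PrY_X h0 k False x = c * ((1 - p) * fX_Y k x False)"
    by (simp_all add: PrY_X_def c_def flip: D_def)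
  show ?thesis
    unfolding rfun_def design.case case_term control_term distrib_left[symmetric] using c by simp
qed

lemma rfun_CasePopulation_eq:
  assumes "0 < h0" "h0 < 1" "0 < fX_Y k x False" "0 < fX_Y k x True"
  shows "rfun CasePopulation h0 k x p = p * fX_Y k x True / fX_Y k x False"
  using assms PrY_X_odds[of h0 k x] PrY_X_denominator_pos[OF assms] by (simp add: rfun_def)

lemma case_control_posterior:
  assumes des: "design1 M g k XX" and x: "x \<in> XX" and pop: "pop_density M g"
    and h0: "0 < h0" "h0 < 1"
    and p: "0 < PrYstar M g True" "PrYstar M g True < 1"
    and f_pos: "0 < fX_Y k x False" "0 < fX_Y k x True"
  shows "PrY1_TXstar g t x =
     rfun CaseControl h0 k x (PrYstar M g True) * Pi k t True x /
     (Pi k t False x + rfun CaseControl h0 k x (PrYstar M g True) *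
        (Pi k t True x - Pi k t False x))"
proof -
  let ?p = "PrYstar M g True" and ?s = "\<lambda>y. fXYstar g y x"
  have p_False: "PrYstar M g False = 1 - ?p"
    using PrYstar_False_add_True[OF pop] by simp
  have f0: "fX_Y k x False = ?s False / (1 - ?p)" and f1: "fX_Y k x True = ?s True / ?p"
    using des x p_False by (auto simp: design1_def fX_Ystar_def fXYstar_def)
  have Pi: "\<And>y. Pi k t y x = g y t x / ?s y"
    using des x by (simp add: design1_def PrT_XYstar_def fXYstar_def)
  have s0: "0 < ?s False"
    using f_pos(1) p by (simp add: f0 zero_less_divide_iff)
  have s1: "0 < ?s True"
    using f_pos(2) p by (simp add: f1 zero_less_divide_iff)
  have r: "rfun CaseControl h0 k x ?p = ?s True / (?s False + ?s True)"
    using p s0 s1 by (simp add: rfun_CaseControl_eq[OF h0 f_pos] f0 f1 add.commute)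
  have lhs: "PrY1_TXstar g t x = g True t x / (g False t x + g True t x)"
    by (simp add: PrY1_TXstar_def add.commute)
  show ?thesis
    unfolding lhs Pi r
    by (rule posterior_eq_reweighted_conditionals) (use s0 s1 in auto)
qed

lemma case_population_posterior:
  assumes des: "design2 M g k XX" and x: "x \<in> XX"
    and h0: "0 < h0" "h0 < 1" and p: "0 < PrYstar M g True"
    and f_pos: "0 < fX_Y k x False" "0 < fX_Y k x True"
  shows "PrY1_TXstar g t x =
     rfun CasePopulation h0 k x (PrYstar M g True) * Pi k t True x / Pi k t False x"
proof -
  let ?p = "PrYstar M g True" and ?s = "\<lambda>y. fXYstar g y x"
  have f0: "fX_Y k x False = ?s False + ?s True" and f1: "fX_Y k x True = ?s True / ?p"
    using des x by (auto simp: design2_def fX_Ystar_def fXstar_def fXYstar_def)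
  have Pi0: "Pi k t False x = (g False t x + g True t x) / (?s False + ?s True)"
    and Pi1: "Pi k t True x = g True t x / ?s True"
    using des x by (auto simp: design2_def PrT_Xstar_def PrT_XYstar_def fXstar_def fXYstar_def)
  have s1: "0 < ?s True"
    using f_pos(2) p by (simp add: f1 zero_less_divide_iff)
  have s: "0 < ?s False + ?s True"
    using f_pos(1) by (simp add: f0)
  have "rfun CasePopulation h0 k x ?p = ?s True / (?s False + ?s True)"
    using p by (simp add: rfun_CasePopulation_eq[OF h0 f_pos] f0 f1)
  then show ?thesis
    using s1 s by (simp add: PrY1_TXstar_def Pi0 Pi1 field_simps)
qed

theorem lemmaA2:
  fixes M :: "'x measure"
    and g :: "bool \<Rightarrow> bool \<Rightarrow> 'x \<Rightarrow> real"
    and k :: "bool \<Rightarrow> bool \<Rightarrow> 'x \<Rightarrow> real"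
    and h0 :: real and d :: design and XX :: "'x set"
  assumes pop: "pop_density M g"
    and obs: "\<And>y. is_density M (k y)"
    and h0: "0 < h0" "h0 < 1"
    and p0_pos: "0 < PrYstar M g True"
    and p0_lt1: "d = CaseControl \<Longrightarrow> PrYstar M g True < 1"
    and supp1: "XX = supp_Xstar M g"
    and supp2: "\<And>y. XX = supp_X_Y M k y"
    and Pi_nz: "\<And>t y x. x \<in> XX \<Longrightarrow> Pi k t y x \<noteq> 0"
    and des: "holds_design d M g k XX"
    and x: "x \<in> XX"
  shows "PrY1_TXstar g t x =
     rfun d h0 k x (PrYstar M g True) * Pi k t True x /
     (Pi k t False x + rfun d h0 k x (if d = CaseControl then PrYstar M g True else 0) *
        (Pi k t True x - Pi k t False x))"
proof -
  have f_pos: "0 < fX_Y k x False" "0 < fX_Y k x True"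
    using x supp2[of False] supp2[of True] by (auto simp: supp_X_Y_def)
  show ?thesis
  proof (cases d)
    case CaseControl
    then show ?thesis
      using des case_control_posterior[OF _ x pop h0 p0_pos _ f_pos] p0_lt1
      by (simp add: holds_design_def)
  next
    case CasePopulation
    then show ?thesis
      using des case_population_posterior[OF _ x h0 p0_pos f_pos]
      by (simp add: holds_design_def rfun_def)
  qed
qed

end
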